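(* Consider holdings of type $J=A$, an integer $R\ge1$, connection parameters $p_1>1$, $p_2>1$, and the configuration $(C_1,C_2)=(1,1)$ almost surely. (a) If $x=0$, then $(C_1,C_2)$ is uninfected and the system is non-resilient. (b) If $x\le -1$ (integer), then $(C_1,C_2)$ is uninfected and the system is resilient.
   Context: Let $x\le0$ be an integer (support level). Let $\mathbf{D}=\{(j,k)\in\mathbb{Z}^2: x\le j\le R,\ x\le k\le R\}$, $\mathbf{D}_{A,1}=\{(j,k)\in\mathbf{D}: j\le x \text{ or } (j+k\le 0 \text{ and } j\le -x)\}$, $\mathbf{D}_{A,2}=\{(j,k)\in\mathbf{D}: k\le x \text{ or } (j+k\le 0 \text{ and } k\le -x)\}$. Network: for each $n$ there are holdings $i\in[n]$, each with subsidiaries $i_1,i_2$ with initial integer capitals $(c_{i,1}(n),c_{i,2}(n))\in\mathbf{D}$; for each $l\in\{1,2\}$ and ordered pair $i\ne j$, a directed edge $i_l\to j_l$ is present with probability $p_l/n$, all independent. Contagion: $c^{(0)}_{i,l}=c_{i,l}(n)$; $\mathcal{S}_{l,k}=\{i: (c^{(k)}_{i,1},c^{(k)}_{i,2})\in\mathbf{D}_{A,l}\}$, $\mathcal{S}_{l,-1}=\emptyset$, $c^{(k+1)}_{j,l}=\max\{x,c^{(k)}_{j,l}-N^{(k)}_{j,l}\}$ with $N^{(k)}_{j,l}$ the number of $i\in\mathcal{S}_{l,k}\setminus\mathcal{S}_{l,k-1}$ with an edge $i_l\to j_l$; final sets $\mathcal{S}_l=\bigcup_k\mathcal{S}_{l,k}$.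 A sequence of networks has limit law $G$ on $\mathbf{D}$ if $n^{-1}\#\{i: c_{i,1}(n)\le a, c_{i,2}(n)\le b\}\to G((-\infty,a]\times(-\infty,b])$ for all $(a,b)\in\mathbf{D}$. A configuration $(C_1,C_2)$ (random vector on $\mathbf{D}$) is uninfected if $\mathbb{P}((C_1,C_2)\in\mathbf{D}_{A,1}\cup\mathbf{D}_{A,2})=0$. A shocked configuration is a random vector $(\tilde C_1,\tilde C_2)$ on $\mathbf{D}$ on the same probability space with $\mathbb{P}(\tilde C_1\le C_1,\tilde C_2\le C_2)=1$ and $\mathbb{P}((\tilde C_1,\tilde C_2)\in\mathbf{D}_{A,1}\cup\mathbf{D}_{A,2})>0$. The system is resilient if for every $\tilde\varepsilon>0$ there is $\varepsilon>0$ such that for every shocked configuration with $\mathbb{P}((\tilde C_1,\tilde C_2)\ne(C_1,C_2))\le\varepsilon$ and every sequence of networks with limit law that of $(\tilde C_1,\tilde C_2)$, $\mathbb{P}(|\mathcal{S}_1|+|\mathcal{S}_2|\le\tilde\varepsilon n)\to1$. It is non-resilient if there is $\Delta>0$ such that for every shocked configuration and every such sequence, $\mathbb{P}(|\mathcal{S}_1|+|\mathcal{S}_2|\ge\Delta n)\to1$. *)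

theory Defs
  imports "HOL-Probability.Probability"
begin

definition capD :: "int \<Rightarrow> int \<Rightarrow> (int \<times> int) set" where
  "capD x R = {(j, k). x \<le> j \<and> j \<le> R \<and> x \<le> k \<and> k \<le> R}"

definition DA :: "int \<Rightarrow> int \<Rightarrow> nat \<Rightarrow> (int \<times> int) set" where
  "DA x R l = capD x R \<inter>
     (if l = 1 then {(j, k). j \<le> x \<or> (j + k \<le> 0 \<and> j \<le> - x)}
      else {(j, k). k \<le> x \<or> (j + k \<le> 0 \<and> k \<le> - x)})"

text \<open>Random two-layer network on n holdings: G (l, i, j) says edge i_l \<rightarrow> j_l is present,
  independently with probability p_l / n (clamped to [0,1]).\<close>
definition edge_pmf :: "real \<Rightarrow> real \<Rightarrow> nat \<Rightarrow> (nat \<times> nat \<times> nat \<Rightarrow> bool) pmf" where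
  "edge_pmf p1 p2 n =
     Pi_pmf {(l, i, j). l \<in> {1, 2} \<and> i < n \<and> j < n \<and> i \<noteq> j} False
       (\<lambda>(l, i, j). bernoulli_pmf (min 1 ((if l = 1 then p1 else p2) / real n)))"

definition comp :: "nat \<Rightarrow> int \<times> int \<Rightarrow> int" where
  "comp l c = (if l = 1 then fst c else snd c)"

definition infected :: "int \<Rightarrow> int \<Rightarrow> nat \<Rightarrow> (nat \<Rightarrow> int \<times> int) \<Rightarrow> nat \<Rightarrow> nat set" where
  "infected x R n cap l = {i. i < n \<and> cap i \<in> DA x R l}"

text \<open>contagion ... k = (c^(k), \<lambda>l. S_{l,k-1}), with S_{l,-1} = {}.\<close>
fun contagion :: "int \<Rightarrow> int \<Rightarrow> nat \<Rightarrow> (nat \<times> nat \<times> nat \<Rightarrow> bool) \<Rightarrow> (nat \<Rightarrow> int \<times> int)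
    \<Rightarrow> nat \<Rightarrow> (nat \<Rightarrow> int \<times> int) \<times> (nat \<Rightarrow> nat set)" where
  "contagion x R n G c 0 = (c, \<lambda>l. {})"
| "contagion x R n G c (Suc k) =
     (let (cap, prev) = contagion x R n G c k;
          S = infected x R n cap;
          N = (\<lambda>l j. card {i \<in> S l - prev l. G (l, i, j)})
      in (\<lambda>j. (max x (fst (cap j) - int (N 1 j)), max x (snd (cap j) - int (N 2 j))), S))"

definition final_S :: "int \<Rightarrow> int \<Rightarrow> nat \<Rightarrow> (nat \<times> nat \<times> nat \<Rightarrow> bool) \<Rightarrow> (nat \<Rightarrow> int \<times> int)
    \<Rightarrow> nat \<Rightarrow> nat set" where
  "final_S x R n G c l = (\<Union>k. infected x R n (fst (contagion x R n G c k)) l)"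

text \<open>A sequence of networks (initial capitals c n i of holding i < n) with limit law G on D.\<close>
definition has_limit_law :: "int \<Rightarrow> int \<Rightarrow> (nat \<Rightarrow> nat \<Rightarrow> int \<times> int) \<Rightarrow> (int \<times> int) pmf \<Rightarrow> bool" where
  "has_limit_law x R c G \<longleftrightarrow>
     (\<forall>n. \<forall>i<n. c n i \<in> capD x R) \<and>
     (\<forall>(a, b) \<in> capD x R.
        (\<lambda>n. real (card {i. i < n \<and> fst (c n i) \<le> a \<and> snd (c n i) \<le> b}) / real n)
          \<longlonglongrightarrow> measure_pmf.prob G {(u, v). u \<le> a \<and> v \<le> b})"

definition uninfected :: "int \<Rightarrow> int \<Rightarrow> (int \<times> int) pmf \<Rightarrow> bool" where
  "uninfected x R C \<longleftrightarrow> set_pmf C \<subseteq> capD x R \<and>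
     measure_pmf.prob C (DA x R 1 \<union> DA x R 2) = 0"

text \<open>A shocked configuration: a joint law Q of (C, C~) with first marginal C.\<close>
definition shocked :: "int \<Rightarrow> int \<Rightarrow> (int \<times> int) pmf \<Rightarrow> ((int \<times> int) \<times> (int \<times> int)) pmf \<Rightarrow> bool" where
  "shocked x R C Q \<longleftrightarrow> map_pmf fst Q = C \<and> set_pmf (map_pmf snd Q) \<subseteq> capD x R \<and>
     measure_pmf.prob Q {(c, c'). fst c' \<le> fst c \<and> snd c' \<le> snd c} = 1 \<and>
     measure_pmf.prob Q {(c, c'). c' \<in> DA x R 1 \<union> DA x R 2} > 0"

definition resilient :: "int \<Rightarrow> int \<Rightarrow> real \<Rightarrow> real \<Rightarrow> (int \<times> int) pmf \<Rightarrow> bool" where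
  "resilient x R p1 p2 C \<longleftrightarrow>
     (\<forall>e'>0. \<exists>e>0. \<forall>Q. shocked x R C Q \<and> measure_pmf.prob Q {(c, c'). c' \<noteq> c} \<le> e \<longrightarrow>
        (\<forall>cs. has_limit_law x R cs (map_pmf snd Q) \<longrightarrow>
          (\<lambda>n. measure_pmf.prob (edge_pmf p1 p2 n)
             {G. real (card (final_S x R n G (cs n) 1) + card (final_S x R n G (cs n) 2)) \<le> e' * real n})
          \<longlonglongrightarrow> 1))"

definition non_resilient :: "int \<Rightarrow> int \<Rightarrow> real \<Rightarrow> real \<Rightarrow> (int \<times> int) pmf \<Rightarrow> bool" where
  "non_resilient x R p1 p2 C \<longleftrightarrow>
     (\<exists>d>0. \<forall>Q. shocked x R C Q \<longrightarrow>
        (\<forall>cs. has_limit_law x R cs (map_pmf snd Q) \<longrightarrow>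
          (\<lambda>n. measure_pmf.prob (edge_pmf p1 p2 n)
             {G. real (card (final_S x R n G (cs n) 1) + card (final_S x R n G (cs n) 2)) \<ge> d * real n})
          \<longlonglongrightarrow> 1))"

end

theory Submission
  imports Defs
begin

text \<open>For x = 0 a holding defaults in layer l as soon as its capital there drops to 0, so a positive
  fraction of seeds in one layer spreads through the supercritical random digraph G(n, p_l/n) among the
  holdings of unit capital.  The default set can only stop below d n if it stalls: every defaulted
  unit holding was hit from inside while no other unit holding was hit from the defaulted ones, and
  a union bound over the possible stalled sets shows this is exponentially unlikely.

  For x \<le> -1 a healthy holding (1, 1) needs two hits before defaulting.  Hence if more than a small
  fraction of the holdings default, the few shocked holdings together with the first healthy
  defaulters form a set of m \<approx> \<theta> n holdings spanning at least 3m/2 edges, and a first moment bound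
  shows that a sparse random graph has no such dense set with high probability.\<close>

section \<open>Contagion dynamics\<close>

abbreviation capital ::
    "int \<Rightarrow> int \<Rightarrow> nat \<Rightarrow> (nat \<times> nat \<times> nat \<Rightarrow> bool) \<Rightarrow> (nat \<Rightarrow> int \<times> int) \<Rightarrow> nat \<Rightarrow> nat \<Rightarrow> int \<times> int"
  where "capital x R n G c k \<equiv> fst (contagion x R n G c k)"

lemma snd_contagion_Suc: "snd (contagion x R n G c (Suc k)) = infected x R n (capital x R n G c k)"
  by (simp add: case_prod_beta Let_def)

lemma comp_capital_Suc:
  assumes "l \<in> {1,2}"
  shows "comp l (capital x R n G c (Suc k) j) = max x (comp l (capital x R n G c k j)
     - int (card {i \<in> infected x R n (capital x R n G c k) l - snd (contagion x R n G c k) l. G (l, i, j)}))"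
  using assms by (auto simp add: case_prod_beta Let_def comp_def)

declare contagion.simps(2)[simp del]

lemma capital_bounds:
  assumes "c j \<in> capD x R" "l \<in> {1,2}"
  shows "x \<le> comp l (capital x R n G c k j) \<and> comp l (capital x R n G c k j) \<le> comp l (c j)"
proof (induction k)
  case 0 then show ?case using assms by (auto simp: capD_def comp_def)
next
  case (Suc k) then show ?case using comp_capital_Suc[OF assms(2)] by auto
qed

lemma capital_in_capD:
  assumes "c j \<in> capD x R"
  shows "capital x R n G c k j \<in> capD x R"
proof -
  have "x \<le> comp l (capital x R n G c k j) \<and> comp l (capital x R n G c k j) \<le> comp l (c j)"
    if "l \<in> {1,2}" for l
    using capital_bounds[where c=c and j=j, OF assms that] .
  from this[of 1] this[of 2] assms show ?thesis by (auto simp: capD_def comp_def split: prod.splits)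
qed

lemma DA_downward_closed:
  assumes "z \<in> DA x R l" "z' \<in> capD x R" "fst z' \<le> fst z" "snd z' \<le> snd z"
  shows "z' \<in> DA x R l"
  using assms by (cases z, cases z') (auto simp: DA_def capD_def split: if_splits)

lemma finite_infected: "finite (infected x R n cp l)"
  by (auto simp: infected_def)

lemma infected_mono_Suc:
  assumes "\<forall>i<n. c i \<in> capD x R"
  shows "infected x R n (capital x R n G c k) l \<subseteq> infected x R n (capital x R n G c (Suc k)) l"
proof
  fix i assume i: "i \<in> infected x R n (capital x R n G c k) l"
  then have c: "c i \<in> capD x R" using assms by (auto simp: infected_def)
  have "comp l' (capital x R n G c (Suc k) i) \<le> comp l' (capital x R n G c k i)" if "l' \<in> {1,2}" for l'
    using comp_capital_Suc[OF that] capital_bounds[where c=c and j=i, OF c that] by auto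
  from this[of 1] this[of 2] have "capital x R n G c (Suc k) i \<in> DA x R l"
    using i capital_in_capD[where c=c and j=i, OF c]
    by (auto simp: comp_def infected_def intro: DA_downward_closed)
  then show "i \<in> infected x R n (capital x R n G c (Suc k)) l" using i by (auto simp: infected_def)
qed

lemma infected_mono:
  assumes "\<forall>i<n. c i \<in> capD x R" "k \<le> k'"
  shows "infected x R n (capital x R n G c k) l \<subseteq> infected x R n (capital x R n G c k') l"
  using assms(2) by (induction k' rule: dec_induct) (use infected_mono_Suc[OF assms(1)] in blast)+

text \<open>Each round only counts hits from the newly defaulted holdings, but since truncation at x
  commutes with further decreases, the capital is the initial one minus all hits so far.\<close>
lemma comp_capital_Suc_eq_hits:
  assumes "\<forall>i<n. c i \<in> capD x R" "l \<in> {1,2}"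
  shows "comp l (capital x R n G c (Suc k) j) = max x (comp l (c j)
          - int (card {i \<in> infected x R n (capital x R n G c k) l. G (l, i, j)}))"
proof (induction k)
  case 0
  then show ?case using comp_capital_Suc[OF assms(2), of x R n G c 0 j] by simp
next
  case (Suc k)
  let ?S = "infected x R n (capital x R n G c k) l"
  let ?S' = "infected x R n (capital x R n G c (Suc k)) l"
  have "?S \<subseteq> ?S'" by (rule infected_mono_Suc[OF assms(1)])
  then have "{i \<in> ?S'. G (l, i, j)} = {i \<in> ?S. G (l, i, j)} \<union> {i \<in> ?S' - ?S. G (l, i, j)}" by auto
  moreover have "{i \<in> ?S. G (l, i, j)} \<inter> {i \<in> ?S' - ?S. G (l, i, j)} = {}" by blast
  ultimately have "card {i \<in> ?S'. G (l, i, j)} = card {i \<in> ?S. G (l, i, j)} + card {i \<in> ?S' - ?S. G (l, i, j)}"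
    by (simp add: card_Un_disjoint finite_infected)
  then show ?case
    using Suc comp_capital_Suc[OF assms(2), of x R n G c "Suc k" j] by (simp add: snd_contagion_Suc)
qed

section \<open>The random two-layer network\<close>

definition edges_within :: "nat set \<Rightarrow> (nat \<times> nat \<times> nat) set" where
  "edges_within U = {(l, u, v). l \<in> {1, 2} \<and> u \<in> U \<and> v \<in> U \<and> u \<noteq> v}"

definition edge_prob :: "real \<Rightarrow> real \<Rightarrow> nat \<Rightarrow> nat \<times> nat \<times> nat \<Rightarrow> real" where
  "edge_prob p1 p2 n = (\<lambda>(l, i, j). min 1 ((if l = 1 then p1 else p2) / real n))"

lemma edges_within_subset_Times: "edges_within U \<subseteq> {1,2} \<times> U \<times> U"
  by (auto simp: edges_within_def)

lemma finite_edges_within: "finite U \<Longrightarrow> finite (edges_within U)"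
  using finite_subset[OF edges_within_subset_Times] by blast

lemma edges_within_mono: "U \<subseteq> V \<Longrightarrow> edges_within U \<subseteq> edges_within V"
  by (auto simp: edges_within_def)

lemma card_edges_within_le: "finite U \<Longrightarrow> card (edges_within U) \<le> 2 * card U ^ 2"
  using card_mono[OF _ edges_within_subset_Times, of U]
  by (simp add: card_cartesian_product power2_eq_square)

lemma edge_pmf_eq_Pi_pmf:
  "edge_pmf p1 p2 n = Pi_pmf (edges_within {..<n}) False (\<lambda>e. bernoulli_pmf (edge_prob p1 p2 n e))"
  unfolding edge_pmf_def edges_within_def edge_prob_def by (intro Pi_pmf_cong) (auto split: prod.splits)

lemma edge_prob_bounds: "p1 \<ge> 0 \<Longrightarrow> p2 \<ge> 0 \<Longrightarrow> 0 \<le> edge_prob p1 p2 n e \<and> edge_prob p1 p2 n e \<le> 1"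
  by (auto simp: edge_prob_def split: prod.splits)

lemma edge_pmf_no_self_loops:
  assumes "G \<in> set_pmf (edge_pmf p1 p2 n)"
  shows "\<not> G (l, i, i)"
proof -
  have "set_pmf (edge_pmf p1 p2 n) \<subseteq> {f. \<forall>e. e \<notin> edges_within {..<n} \<longrightarrow> f e = False}"
    unfolding edge_pmf_eq_Pi_pmf by (rule set_Pi_pmf_subset[OF finite_edges_within[of "{..<n}", simplified]])
  then show ?thesis using assms by (auto simp: edges_within_def)
qed

lemma prob_edge_pattern:
  assumes "E1 \<subseteq> edges_within {..<n}" "E0 \<subseteq> edges_within {..<n}" "E1 \<inter> E0 = {}" "p1 \<ge> 0" "p2 \<ge> 0"
  shows "measure_pmf.prob (edge_pmf p1 p2 n) {G. (\<forall>e\<in>E1. G e) \<and> (\<forall>e\<in>E0. \<not> G e)}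
     = (\<Prod>e\<in>E1. edge_prob p1 p2 n e) * (\<Prod>e\<in>E0. 1 - edge_prob p1 p2 n e)"
proof -
  define B where "B = (\<lambda>e. if e \<in> E1 then {True} else if e \<in> E0 then {False} else (UNIV :: bool set))"
  define f where "f = (\<lambda>e. if e \<in> E1 then edge_prob p1 p2 n e
                           else if e \<in> E0 then 1 - edge_prob p1 p2 n e else 1)"
  have "{G. (\<forall>e\<in>E1. G e) \<and> (\<forall>e\<in>E0. \<not> G e)} = Pi (edges_within {..<n}) B"
    using assms(1-3) unfolding B_def Pi_def by (auto split: if_splits) blast+
  moreover have "measure_pmf.prob (bernoulli_pmf (edge_prob p1 p2 n e)) (B e) = f e" for e
    using edge_prob_bounds[OF assms(4,5), of n e] by (auto simp: B_def f_def measure_pmf_single)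
  ultimately have "measure_pmf.prob (edge_pmf p1 p2 n) {G. (\<forall>e\<in>E1. G e) \<and> (\<forall>e\<in>E0. \<not> G e)}
      = (\<Prod>e\<in>edges_within {..<n}. f e)"
    unfolding edge_pmf_eq_Pi_pmf by (simp add: measure_Pi_pmf_Pi[OF finite_edges_within[of "{..<n}", simplified]])
  also have "\<dots> = (\<Prod>e\<in>E1 \<union> E0. f e)"
    by (rule prod.mono_neutral_right) (use assms(1,2) finite_edges_within[of "{..<n}", simplified] in \<open>auto simp: f_def\<close>)
  also have "\<dots> = (\<Prod>e\<in>E1. f e) * (\<Prod>e\<in>E0. f e)"
    by (rule prod.union_disjoint) (use assms(1-3) finite_edges_within[of "{..<n}", simplified] in \<open>auto intro: finite_subset\<close>)
  also have "\<dots> = (\<Prod>e\<in>E1. edge_prob p1 p2 n e) * (\<Prod>e\<in>E0. 1 - edge_prob p1 p2 n e)"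
    using assms(3) by (auto simp: f_def intro!: arg_cong2[where f="(*)"] prod.cong)
  finally show ?thesis .
qed

lemma prob_all_edges_le:
  assumes "E \<subseteq> edges_within {..<n}" "0 \<le> p1" "0 \<le> p2" "p1 \<le> lam" "p2 \<le> lam"
  shows "measure_pmf.prob (edge_pmf p1 p2 n) {G. \<forall>e\<in>E. G e} \<le> (lam / real n) ^ card E"
proof -
  have "measure_pmf.prob (edge_pmf p1 p2 n) {G. \<forall>e\<in>E. G e} = (\<Prod>e\<in>E. edge_prob p1 p2 n e)"
    using prob_edge_pattern[OF assms(1), of "{}"] assms by simp
  also have "\<dots> \<le> (\<Prod>e\<in>E. lam / real n)"
    using assms edge_prob_bounds[OF assms(2,3)]
    by (intro prod_mono) (auto simp: edge_prob_def divide_right_mono intro: min.coboundedI2)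
  finally show ?thesis by simp
qed

lemma prob_edge_pattern_layer:
  assumes "E1 \<subseteq> edges_within {..<n}" "E0 \<subseteq> edges_within {..<n}" "E1 \<inter> E0 = {}"
    and "\<forall>e\<in>E1 \<union> E0. fst e = l" and "p1 \<ge> 0" "p2 \<ge> 0" "(if l = 1 then p1 else p2) \<le> real n"
  shows "measure_pmf.prob (edge_pmf p1 p2 n) {G. (\<forall>e\<in>E1. G e) \<and> (\<forall>e\<in>E0. \<not> G e)}
     = ((if l = 1 then p1 else p2) / real n) ^ card E1 * (1 - (if l = 1 then p1 else p2) / real n) ^ card E0"
proof -
  have "edge_prob p1 p2 n e = (if l = 1 then p1 else p2) / real n" if "e \<in> E1 \<union> E0" for e
  proof -
    have "fst e = l" using assms(4) that by blast
    then show ?thesis using assms(7) by (cases "n = 0") (auto simp: edge_prob_def case_prod_beta)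
  qed
  then show ?thesis by (simp add: prob_edge_pattern[OF assms(1-3,5,6)])
qed

lemma prob_finite_UN_le:
  fixes M :: "'a pmf"
  assumes "finite I" "\<And>i. i \<in> I \<Longrightarrow> measure_pmf.prob M (A i) \<le> b"
  shows "measure_pmf.prob M (\<Union>i\<in>I. A i) \<le> real (card I) * b"
proof -
  have "measure_pmf.prob M (\<Union>i\<in>I. A i) \<le> (\<Sum>i\<in>I. measure_pmf.prob M (A i))"
    by (rule measure_pmf.finite_measure_subadditive_finite) (use assms in auto)
  also have "\<dots> \<le> (\<Sum>i\<in>I. b)" by (rule sum_mono) (use assms in auto)
  finally show ?thesis by simp
qed

lemma tendsto_one_if_ge_one_minus_null:
  fixes P b :: "nat \<Rightarrow> real"
  assumes "eventually (\<lambda>n. 1 - b n \<le> P n) sequentially" "\<And>n. P n \<le> 1" "b \<longlonglongrightarrow> 0"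
  shows "P \<longlonglongrightarrow> 1"
proof (rule tendsto_sandwich[OF assms(1) _ _ tendsto_const])
  show "(\<lambda>n. 1 - b n) \<longlonglongrightarrow> 1" using tendsto_diff[OF tendsto_const assms(3), of 1] by simp
qed (use assms(2) in simp)

lemma prob_Collect_not: "measure_pmf.prob M {z. \<not> P z} = 1 - measure_pmf.prob M {z. P z}"
  using measure_pmf.prob_compl[of "{z. P z}" M] by (simp add: Compl_eq Diff_eq)

section \<open>Elementary estimates\<close>

lemma choose_le_pow_div_fact: "real (N choose K) \<le> real N ^ K / fact K"
proof -
  have "real (N choose K) * fact K \<le> real N ^ K"
    by (metis binomial_fact_pow of_nat_fact of_nat_le_iff of_nat_mult of_nat_power)
  then show ?thesis by (simp add: field_simps)
qed

lemma pow_div_fact_le_exp: "x \<ge> 0 \<Longrightarrow> x ^ k / fact k \<le> exp (x::real)"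
proof -
  assume x: "x \<ge> 0"
  have s: "(\<lambda>n. x ^ n /\<^sub>R fact n) sums exp x" by (rule exp_converges)
  have "(\<Sum>n\<in>{k}. x ^ n /\<^sub>R fact n) \<le> exp x"
    using sum_le_suminf[OF sums_summable[OF s], of "{k}"] sums_unique[OF s] x by auto
  then show ?thesis by (simp add: divide_inverse_commute)
qed

lemma pow_div_fact_le: "y ^ k / fact k \<le> (exp 1 * y / real k) ^ k" if "y \<ge> 0" "k > 0"
proof -
  have "(real k) ^ k / exp (real k) \<le> fact k"
    using pow_div_fact_le_exp[of "real k" k] by (simp add: field_simps)
  moreover have "exp (real k) = exp 1 ^ k" by (simp add: exp_of_nat_mult[symmetric])
  ultimately have f: "(real k / exp 1) ^ k \<le> fact k" by (simp add: power_divide)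
  have "y ^ k / fact k \<le> y ^ k / (real k / exp 1) ^ k"
    by (rule divide_left_mono[OF f]) (use that in auto)
  also have "\<dots> = (exp 1 * y / real k) ^ k" by (simp add: power_divide field_simps)
  finally show ?thesis .
qed

lemma choose_le_exp_pow: "m > 0 \<Longrightarrow> real (n choose m) \<le> (exp 1 * real n / real m) ^ m"
  using choose_le_pow_div_fact[of n m] pow_div_fact_le[of "real n" m] by simp

lemma minus_one_minus_ln_pos: "p > 1 \<Longrightarrow> p - 1 - ln p > (0::real)"
  using ln_le_minus_one[of p] ln_eq_minus_one[of p] by fastforce

lemma pow_div_fact_le_exp_ln:
  fixes p y T :: real and a :: nat
  assumes p: "p > 1" and aT: "real a \<le> T" and Ty: "T \<le> y"
  shows "(p * y) ^ a / fact a \<le> exp (T * ln p + y)"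
proof (cases "a = 0")
  case True
  then show ?thesis using p aT Ty by (simp add: add_nonneg_nonneg)
next
  case False
  have ra: "real a > 0" and y0: "y > 0" using False aT Ty by auto
  have "(p * y) ^ a / fact a \<le> (exp 1 * (p * y) / real a) ^ a"
    by (rule pow_div_fact_le) (use p y0 False in auto)
  also have "\<dots> = exp (real a * ln (exp 1 * (p * y) / real a))"
  proof -
    have "exp 1 * (p * y) / real a > 0" using p y0 ra by simp
    then show ?thesis by (simp only: exp_of_nat_mult exp_ln)
  qed
  also have "\<dots> \<le> exp (T * ln p + y)"
  proof -
    have "ln (exp 1 * (p * y) / real a) = 1 + ln p + ln (y / real a)"
      using p y0 ra by (simp add: ln_mult ln_div)
    also have "\<dots> \<le> 1 + ln p + (y / real a - 1)" using ln_le_minus_one[of "y / real a"] y0 ra by simp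
    finally have "real a * ln (exp 1 * (p * y) / real a) \<le> real a * ln p + y"
      using ra by (simp add: mult_left_mono field_simps)
    also have "\<dots> \<le> T * ln p + y" using aT p by (simp add: mult_right_mono)
    finally show ?thesis by simp
  qed
  finally show ?thesis .
qed

lemma half_pow_nat_floor_tendsto_0:
  fixes th :: real assumes "th > 0"
  shows "(\<lambda>n. (1/2::real) ^ nat \<lfloor>th * real n\<rfloor>) \<longlonglongrightarrow> 0"
proof -
  have "filterlim (\<lambda>n. nat \<lfloor>th * real n\<rfloor>) at_top sequentially"
  proof (subst filterlim_at_top, intro allI)
    fix Z :: nat
    obtain N :: nat where N: "real N > (real Z + 1) / th" using reals_Archimedean2 by blast
    show "eventually (\<lambda>n. Z \<le> nat \<lfloor>th * real n\<rfloor>) sequentially"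
    proof (rule eventually_sequentiallyI[of N])
      fix n assume "N \<le> n"
      then have "real n > (real Z + 1) / th" using N by linarith
      then have "th * real n > real Z + 1" using assms by (simp add: field_simps)
      then show "Z \<le> nat \<lfloor>th * real n\<rfloor>" by linarith
    qed
  qed
  from filterlim_compose[OF LIMSEQ_realpow_zero[of "1/2"] this] show ?thesis by simp
qed

lemma linear_times_exp_neg_tendsto_0:
  fixes a :: real assumes "a > 0"
  shows "(\<lambda>n. (real n + 1) * exp (- a * real n)) \<longlonglongrightarrow> 0"
  using assms by real_asymp

section \<open>Resilience below zero\<close>

definition edges_in :: "(nat \<times> nat \<times> nat \<Rightarrow> bool) \<Rightarrow> nat set \<Rightarrow> (nat \<times> nat \<times> nat) set" where
  "edges_in G U = {e \<in> edges_within U. G e}"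

lemma finite_edges_in: "finite U \<Longrightarrow> finite (edges_in G U)"
  by (simp add: edges_in_def finite_edges_within)

lemma healthy_default_needs_two_hits:
  assumes hc: "\<forall>i<n. c i \<in> capD x R" and x: "x \<le> -1" and v: "c v = (1, 1)"
    and l: "l \<in> {1,2}" and def: "v \<in> infected x R n (capital x R n G c (Suc k)) l"
  shows "2 \<le> card {i \<in> infected x R n (capital x R n G c k) 1. G (1, i, v)}
            + card {i \<in> infected x R n (capital x R n G c k) 2. G (2, i, v)}"
proof -
  have "capital x R n G c (Suc k) v \<in> DA x R l" using def by (simp add: infected_def)
  then show ?thesis
    using comp_capital_Suc_eq_hits[OF hc, of 1 G k v] comp_capital_Suc_eq_hits[OF hc, of 2 G k v] v x l
    by (auto simp: DA_def comp_def)
qed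

lemma exists_between_chain_with_card:
  fixes X :: "nat \<Rightarrow> 'a set"
  assumes mono: "\<And>k k'. k \<le> k' \<Longrightarrow> X k \<subseteq> X k'" and "X 0 = {}"
    and fin: "finite (\<Union>k. X k)" and a: "a \<le> card (\<Union>k. X k)"
  shows "\<exists>k T. X k \<subseteq> T \<and> T \<subseteq> X (Suc k) \<and> card T = a"
proof -
  have finX: "finite (X k)" for k using fin by (rule finite_subset[rotated]) blast
  have ex: "\<exists>k. a \<le> card (X k)"
  proof -
    obtain f where f: "\<forall>i\<in>(\<Union>k. X k). i \<in> X (f i)" by (metis UN_E)
    define K where "K = Max (f ` (\<Union>k. X k))"
    have "(\<Union>k. X k) \<subseteq> X K"
    proof
      fix i assume i: "i \<in> (\<Union>k. X k)"
      then have "f i \<le> K" using fin by (auto simp: K_def)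
      then show "i \<in> X K" using f i mono by blast
    qed
    then show ?thesis using a card_mono[OF finX] by (meson order_trans)
  qed
  define k where "k = (LEAST k. a \<le> card (X k))"
  have ak: "a \<le> card (X k)" unfolding k_def by (rule LeastI_ex[OF ex])
  show ?thesis
  proof (cases k)
    case 0
    then show ?thesis using ak \<open>X 0 = {}\<close> by (intro exI[of _ 0] exI[of _ "{}"]) auto
  next
    case (Suc k')
    have lt: "card (X k') < a" using Suc not_less_Least[of k' "\<lambda>k. a \<le> card (X k)"] by (auto simp: k_def)
    have sub: "X k' \<subseteq> X k" using mono Suc by simp
    have "a - card (X k') \<le> card (X k - X k')"
      using ak card_Diff_subset[OF finX sub] card_mono[OF finX sub] by simp
    then obtain T' where T': "T' \<subseteq> X k - X k'" "card T' = a - card (X k')"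
      by (meson obtain_subset_with_card_n)
    have "card (X k' \<union> T') = a"
      using T' lt finX[of k] by (subst card_Un_disjoint) (auto intro: finite_subset finX)
    then show ?thesis using T' sub Suc by (intro exI[of _ k'] exI[of _ "X k' \<union> T'"]) auto
  qed
qed

lemma card_edges_in_ge_in_hits:
  assumes finU: "finite U" and T: "T \<subseteq> U" and S: "S1 \<subseteq> U" "S2 \<subseteq> U"
    and noloop: "\<And>l i. \<not> G (l, i, i)"
    and hits: "\<And>v. v \<in> T \<Longrightarrow> d \<le> card {u \<in> S1. G (1, u, v)} + card {u \<in> S2. G (2, u, v)}"
  shows "d * card T \<le> card (edges_in G U)"
proof -
  define hits_of where "hits_of = (\<lambda>v. (\<lambda>u. (1::nat, u, v)) ` {u \<in> S1. G (1, u, v)}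
      \<union> (\<lambda>u. (2, u, v)) ` {u \<in> S2. G (2, u, v)})"
  have fin: "finite S1" "finite S2" using S finU finite_subset by blast+
  have card_hits: "card (hits_of v) = card {u \<in> S1. G (1, u, v)} + card {u \<in> S2. G (2, u, v)}" for v
    unfolding hits_of_def using fin
    by (subst card_Un_disjoint) (auto simp: card_image inj_on_def)
  have "d * card T = (\<Sum>v\<in>T. d)" by simp
  also have "\<dots> \<le> (\<Sum>v\<in>T. card (hits_of v))" using hits card_hits by (intro sum_mono) simp
  also have "\<dots> = card (\<Union>v\<in>T. hits_of v)"
    using finU T fin by (subst card_UN_disjoint) (auto simp: hits_of_def intro: finite_subset)
  also have "\<dots> \<le> card (edges_in G U)"
    using T S noloop finU
    by (intro card_mono finite_edges_in) (auto simp: hits_of_def edges_in_def edges_within_def)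
  finally show ?thesis .
qed

text \<open>Take all shocked holdings together with healthy defaulted ones, chosen in the order of their
  default, so that each chosen healthy holding received its two hits from inside the set.\<close>
lemma dense_set_of_large_default:
  assumes hc: "\<forall>i<n. c i \<in> capD x R" and x: "x \<le> -1" and noloop: "\<And>l i. \<not> G (l, i, i)"
    and m: "card {i. i < n \<and> c i \<noteq> (1, 1)} \<le> m"
      "m \<le> card (final_S x R n G c 1 \<union> final_S x R n G c 2)"
  shows "\<exists>U. U \<subseteq> {..<n} \<and> card U = m \<and>
           2 * (m - card {i. i < n \<and> c i \<noteq> (1, 1)}) \<le> card (edges_in G U)"
proof -
  define Bad where "Bad = {i. i < n \<and> c i \<noteq> (1, 1)}"
  define I where "I = (\<lambda>k. infected x R n (capital x R n G c k) 1 \<union> infected x R n (capital x R n G c k) 2)"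
  define X where "X = (\<lambda>k. I k - Bad)"
  have finBad: "finite Bad" by (simp add: Bad_def)
  have I_less: "I k \<subseteq> {..<n}" for k by (auto simp: I_def infected_def)
  have "X k \<subseteq> X k'" if "k \<le> k'" for k k'
    using infected_mono[OF hc that, of G 1] infected_mono[OF hc that, of G 2] by (auto simp: X_def I_def)
  moreover have "X 0 = {}" using x by (auto simp: X_def I_def Bad_def infected_def DA_def)
  moreover have UX: "(\<Union>k. X k) = (final_S x R n G c 1 \<union> final_S x R n G c 2) - Bad"
    by (auto simp: X_def I_def final_S_def)
  moreover have finUX: "finite (\<Union>k. X k)" using I_less by (auto simp: X_def intro: finite_subset)
  moreover have "m - card Bad \<le> card (\<Union>k. X k)"
  proof -
    have "card (final_S x R n G c 1 \<union> final_S x R n G c 2) \<le> card ((\<Union>k. X k) \<union> Bad)"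
      using finUX finBad UX by (intro card_mono) auto
    then show ?thesis using m(2) card_Un_le[of "\<Union>k. X k" Bad] by linarith
  qed
  ultimately obtain k T where T: "X k \<subseteq> T" "T \<subseteq> X (Suc k)" "card T = m - card Bad"
    using exists_between_chain_with_card by metis
  define U where "U = Bad \<union> T"
  have finT: "finite T" using T(2) I_less by (auto simp: X_def intro: finite_subset)
  have U_less: "U \<subseteq> {..<n}" using T(2) I_less by (auto simp: U_def Bad_def X_def)
  have "Bad \<inter> T = {}" using T(2) by (auto simp: X_def)
  then have "card U = m" using T(3) m(1) finBad finT by (simp add: U_def card_Un_disjoint Bad_def)
  moreover have "2 * card T \<le> card (edges_in G U)"
  proof (rule card_edges_in_ge_in_hits[where G=G])
    show "\<not> G (l, i, i)" for l i by (rule noloop)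
    show "finite U" using U_less finite_subset by blast
    show "infected x R n (capital x R n G c k) 1 \<subseteq> U" "infected x R n (capital x R n G c k) 2 \<subseteq> U"
      using T(1) I_less by (auto simp: U_def X_def I_def Bad_def infected_def)
    show "2 \<le> card {i \<in> infected x R n (capital x R n G c k) 1. G (1, i, v)}
            + card {i \<in> infected x R n (capital x R n G c k) 2. G (2, i, v)}" if "v \<in> T" for v
    proof -
      have "v \<in> I (Suc k)" "c v = (1, 1)" using that T(2) by (auto simp: X_def Bad_def I_def infected_def)
      then show ?thesis using healthy_default_needs_two_hits[OF hc x] by (auto simp: I_def)
    qed
  qed (auto simp: U_def)
  ultimately show ?thesis using U_less T(3) by (auto simp: Bad_def)
qed

lemma prob_dense_within_le:
  assumes "U \<subseteq> {..<n}" "0 \<le> p1" "0 \<le> p2" "p1 \<le> lam" "p2 \<le> lam"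
  shows "measure_pmf.prob (edge_pmf p1 p2 n) {G. K \<le> card (edges_in G U)}
     \<le> real (card (edges_within U) choose K) * (lam / real n) ^ K"
proof -
  define EE where "EE = {E. E \<subseteq> edges_within U \<and> card E = K}"
  have fin: "finite (edges_within U)" using assms(1) by (auto intro: finite_edges_within finite_subset)
  have "{G. K \<le> card (edges_in G U)} \<subseteq> (\<Union>E\<in>EE. {G. \<forall>e\<in>E. G e})"
  proof
    fix G assume "G \<in> {G. K \<le> card (edges_in G U)}"
    then obtain E where "E \<subseteq> edges_in G U" "card E = K" by (auto intro: obtain_subset_with_card_n)
    then show "G \<in> (\<Union>E\<in>EE. {G. \<forall>e\<in>E. G e})" by (auto simp: EE_def edges_in_def)
  qed
  then have "measure_pmf.prob (edge_pmf p1 p2 n) {G. K \<le> card (edges_in G U)}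
      \<le> measure_pmf.prob (edge_pmf p1 p2 n) (\<Union>E\<in>EE. {G. \<forall>e\<in>E. G e})"
    by (rule measure_pmf.finite_measure_mono) simp
  also have "\<dots> \<le> real (card EE) * (lam / real n) ^ K"
  proof (rule prob_finite_UN_le)
    show "finite EE" unfolding EE_def by (rule finite_subset[of _ "Pow (edges_within U)"]) (use fin in auto)
    show "measure_pmf.prob (edge_pmf p1 p2 n) {G. \<forall>e\<in>E. G e} \<le> (lam / real n) ^ K" if "E \<in> EE" for E
      using that prob_all_edges_le[of E n p1 p2 lam] edges_within_mono[OF assms(1)] assms(2-)
      by (auto simp: EE_def)
  qed
  also have "card EE = card (edges_within U) choose K" using n_subsets[OF fin] by (simp add: EE_def)
  finally show ?thesis .
qed

lemma prob_exists_dense_set_le: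
  assumes "0 \<le> p1" "0 \<le> p2" "p1 \<le> lam" "p2 \<le> lam"
  shows "measure_pmf.prob (edge_pmf p1 p2 n) {G. \<exists>U. U \<subseteq> {..<n} \<and> card U = m \<and> K \<le> card (edges_in G U)}
     \<le> real (n choose m) * (real (2 * m ^ 2) ^ K / fact K * (lam / real n) ^ K)"
proof -
  define UU where "UU = {U. U \<subseteq> {..<n} \<and> card U = m}"
  have "measure_pmf.prob (edge_pmf p1 p2 n) {G. \<exists>U. U \<subseteq> {..<n} \<and> card U = m \<and> K \<le> card (edges_in G U)}
      \<le> measure_pmf.prob (edge_pmf p1 p2 n) (\<Union>U\<in>UU. {G. K \<le> card (edges_in G U)})"
    by (rule measure_pmf.finite_measure_mono) (auto simp: UU_def)
  also have "\<dots> \<le> real (card UU) * (real (2 * m ^ 2) ^ K / fact K * (lam / real n) ^ K)"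
  proof (rule prob_finite_UN_le)
    show "finite UU" unfolding UU_def by (rule finite_subset[of _ "Pow {..<n}"]) auto
    fix U assume "U \<in> UU"
    then have U: "U \<subseteq> {..<n}" "card U = m" "finite U" by (auto simp: UU_def intro: finite_subset)
    have "real (card (edges_within U) choose K) \<le> real (card (edges_within U)) ^ K / fact K"
      by (rule choose_le_pow_div_fact)
    also have "\<dots> \<le> real (2 * m ^ 2) ^ K / fact K"
      using card_edges_within_le[OF U(3)] U(2)
      by (intro divide_right_mono power_mono) (simp_all only: of_nat_le_iff of_nat_0_le_iff fact_ge_zero)
    finally have "real (card (edges_within U) choose K) \<le> real (2 * m ^ 2) ^ K / fact K" .
    moreover have "0 \<le> (lam / real n) ^ K" using assms by simp
    ultimately show "measure_pmf.prob (edge_pmf p1 p2 n) {G. K \<le> card (edges_in G U)}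
        \<le> real (2 * m ^ 2) ^ K / fact K * (lam / real n) ^ K"
      using prob_dense_within_le[OF U(1) assms, of K] by (meson mult_right_mono order_trans)
  qed
  also have "card UU = n choose m" using n_subsets[of "{..<n}" m] by (simp add: UU_def)
  finally show ?thesis .
qed

text \<open>The two exponents are compared after squaring, as only 2K \<ge> 3m is known.\<close>
lemma dense_set_bound:
  fixes lam th :: real and n m K :: nat
  assumes lam: "lam > 0" and m: "m \<ge> 1" and mth: "real m \<le> th * real n"
    and K: "3 * m \<le> 2 * K"
    and C: "exp 1 ^ 2 * (4 * exp 1 / 3) ^ 3 * lam ^ 3 * th \<le> 1 / 4"
    and z: "(4 * exp 1 / 3) * lam * th \<le> 1"
  shows "real (n choose m) * (real (2 * m ^ 2) ^ K / fact K * (lam / real n) ^ K) \<le> (1/2) ^ m"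
proof -
  define e where "e = exp (1::real)"
  define r where "r = real m / real n"
  define A where "A = (e / r) ^ m"
  define w where "w = e * (real (2 * m ^ 2) * lam / real n) / real K"
  have n: "n > 0" using mth m lam by (cases "n = 0") auto
  have e0: "e > 0" by (simp add: e_def)
  have rK: "real K > 0" using K m by linarith
  have r0: "r > 0" and rth: "r \<le> th" using m n mth by (auto simp: r_def field_simps)
  have w0: "w \<ge> 0" using e0 lam rK by (simp add: w_def)
  have c1: "real (n choose m) \<le> A"
    using choose_le_exp_pow[of m n] m by (simp add: A_def e_def r_def)
  have "real (2 * m ^ 2) ^ K / fact K * (lam / real n) ^ K = (real (2 * m ^ 2) * lam / real n) ^ K / fact K"
    by (simp add: power_mult_distrib power_divide)
  also have "\<dots> \<le> w ^ K"
    unfolding w_def e_def by (rule pow_div_fact_le) (use lam rK in auto)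
  finally have c2: "real (2 * m ^ 2) ^ K / fact K * (lam / real n) ^ K \<le> w ^ K" .
  have wle: "w \<le> (4 * e / 3) * lam * r"
  proof -
    have "3 * real m \<le> 2 * real K" using K by linarith
    then have "real (2 * m ^ 2) / real K \<le> 4 / 3 * real m"
      using rK m by (simp add: field_simps power2_eq_square)
    then have "e * lam / real n * (real (2 * m ^ 2) / real K) \<le> e * lam / real n * (4 / 3 * real m)"
      by (rule mult_left_mono) (use e0 lam in auto)
    then show ?thesis by (simp add: w_def r_def field_simps)
  qed
  have "(4 * e / 3) * lam * r \<le> (4 * e / 3) * lam * th"
    using rth e0 lam by (intro mult_left_mono) auto
  then have w1: "w \<le> 1" using wle z unfolding e_def by linarith
  define T where "T = real (n choose m) * (real (2 * m ^ 2) ^ K / fact K * (lam / real n) ^ K)"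
  have "T \<le> A * w ^ K" unfolding T_def by (rule mult_mono[OF c1 c2]) (use A_def e0 r0 lam in auto)
  then have "T ^ 2 \<le> (A * w ^ K) ^ 2" by (rule power_mono) (use lam in \<open>auto simp: T_def\<close>)
  also have "\<dots> = A ^ 2 * w ^ (2 * K)" by (simp add: power_mult_distrib power_mult[symmetric] mult.commute)
  also have "\<dots> \<le> A ^ 2 * w ^ (3 * m)" by (rule mult_left_mono[OF power_decreasing[OF K w0 w1]]) simp
  also have "\<dots> = ((e / r) ^ 2 * w ^ 3) ^ m"
    by (simp add: A_def power_mult_distrib power_mult[symmetric] mult.commute)
  also have "\<dots> \<le> ((1/2) ^ 2) ^ m"
  proof (rule power_mono)
    have "(e / r) ^ 2 * w ^ 3 \<le> (e / r) ^ 2 * ((4 * e / 3) * lam * r) ^ 3"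
      using power_mono[OF wle w0, of 3] by (rule mult_left_mono) simp
    also have "\<dots> = e ^ 2 * (4 * e / 3) ^ 3 * lam ^ 3 * r"
      using r0 by (simp add: field_simps power2_eq_square power3_eq_cube)
    also have "\<dots> \<le> e ^ 2 * (4 * e / 3) ^ 3 * lam ^ 3 * th" using rth e0 lam by (intro mult_left_mono) auto
    also have "\<dots> \<le> (1/2) ^ 2" using C by (simp add: e_def power2_eq_square)
    finally show "(e / r) ^ 2 * w ^ 3 \<le> (1/2) ^ 2" .
  qed (use w0 in simp)
  also have "\<dots> = ((1/2) ^ m) ^ 2" by (simp add: power_mult[symmetric] mult.commute)
  finally have "T ^ 2 \<le> ((1/2) ^ m) ^ 2" .
  then show ?thesis unfolding T_def by (rule power2_le_imp_le) simp
qed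

lemma shocked_return_pmf_snd:
  assumes sh: "shocked x R (return_pmf c0) Q"
  shows "measure_pmf.prob (map_pmf snd Q) {(u, v). u \<le> fst c0 \<and> v \<le> snd c0} = 1"
    and "c0 \<notin> A \<Longrightarrow> measure_pmf.prob (map_pmf snd Q) A \<le> measure_pmf.prob Q {(c, c'). c' \<noteq> c}"
proof -
  have fst: "fst z = c0" if "z \<in> set_pmf Q" for z
    using that sh set_map_pmf[of fst Q] by (auto simp: shocked_def)
  have "measure_pmf.prob Q {(c, c'). fst c' \<le> fst c \<and> snd c' \<le> snd c}
      \<le> measure_pmf.prob (map_pmf snd Q) {(u, v). u \<le> fst c0 \<and> v \<le> snd c0}"
    unfolding measure_map_pmf
    by (rule measure_pmf.finite_measure_mono_AE) (auto simp: AE_measure_pmf_iff dest: fst)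
  then show "measure_pmf.prob (map_pmf snd Q) {(u, v). u \<le> fst c0 \<and> v \<le> snd c0} = 1"
    using sh measure_pmf.prob_le_1 by (simp add: shocked_def antisym)
  show "measure_pmf.prob (map_pmf snd Q) A \<le> measure_pmf.prob Q {(c, c'). c' \<noteq> c}" if "c0 \<notin> A"
    unfolding measure_map_pmf
    by (rule measure_pmf.finite_measure_mono_AE) (use that in \<open>auto simp: AE_measure_pmf_iff dest!: fst\<close>)
qed

lemma card_ne_11_le:
  fixes c :: "nat \<Rightarrow> int \<times> int" and n :: nat
  defines "C \<equiv> \<lambda>a b. {i. i < n \<and> fst (c i) \<le> a \<and> snd (c i) \<le> b}"
  shows "card {i. i < n \<and> c i \<noteq> (1, 1)} + card (C 1 1) \<le> n + card (C 0 1) + card (C 1 0)"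
proof -
  have fin: "finite (C a b)" for a b by (simp add: C_def)
  have "{i. i < n \<and> c i \<noteq> (1, 1)} \<subseteq> ({..<n} - C 1 1) \<union> (C 0 1 \<union> C 1 0)"
    by (auto simp: C_def prod_eq_iff)
  then have "card {i. i < n \<and> c i \<noteq> (1, 1)} \<le> card (({..<n} - C 1 1) \<union> (C 0 1 \<union> C 1 0))"
    by (rule card_mono[rotated]) (simp add: fin)
  then have "card {i. i < n \<and> c i \<noteq> (1, 1)} \<le> card ({..<n} - C 1 1) + card (C 0 1 \<union> C 1 0)"
    using card_Un_le[of "{..<n} - C 1 1" "C 0 1 \<union> C 1 0"] by linarith
  moreover have "C 1 1 \<subseteq> {..<n}" by (auto simp: C_def)
  then have "card ({..<n} - C 1 1) + card (C 1 1) = n"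
    using card_Diff_subset[OF fin] card_mono[of "{..<n}" "C 1 1"] by simp
  ultimately show ?thesis using card_Un_le[of "C 0 1" "C 1 0"] by linarith
qed

lemma eventually_few_unhealthy:
  fixes cs :: "nat \<Rightarrow> nat \<Rightarrow> int \<times> int"
  assumes lim: "has_limit_law x R cs Gl" and x: "x \<le> 0" and R: "R \<ge> 1"
    and P11: "measure_pmf.prob Gl {(u, v). u \<le> 1 \<and> v \<le> 1} = 1"
    and P01: "measure_pmf.prob Gl {(u, v). u \<le> 0 \<and> v \<le> 1} \<le> e"
    and P10: "measure_pmf.prob Gl {(u, v). u \<le> 1 \<and> v \<le> 0} \<le> e"
    and e: "e > 0"
  shows "eventually (\<lambda>n. real (card {i. i < n \<and> cs n i \<noteq> (1, 1)}) \<le> 3 * e * real n) sequentially"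
proof -
  define r where "r = (\<lambda>a b n. real (card {i. i < n \<and> fst (cs n i) \<le> a \<and> snd (cs n i) \<le> b}) / real n)"
  have L: "r a b \<longlonglongrightarrow> measure_pmf.prob Gl {(u, v). u \<le> a \<and> v \<le> b}" if "x \<le> a" "a \<le> R" "x \<le> b" "b \<le> R" for a b
    using lim that unfolding has_limit_law_def r_def capD_def by auto
  have "(\<lambda>n. 1 - r 1 1 n + r 0 1 n + r 1 0 n) \<longlonglongrightarrow> 1 - 1 + measure_pmf.prob Gl {(u, v). u \<le> 0 \<and> v \<le> 1}
      + measure_pmf.prob Gl {(u, v). u \<le> 1 \<and> v \<le> 0}"
    using L[of 1 1] L[of 0 1] L[of 1 0] x R P11 by (intro tendsto_intros) (auto simp: case_prod_beta)
  moreover have "1 - 1 + measure_pmf.prob Gl {(u, v). u \<le> 0 \<and> v \<le> 1}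
      + measure_pmf.prob Gl {(u, v). u \<le> 1 \<and> v \<le> 0} < 3 * e" using P01 P10 e by simp
  ultimately have "eventually (\<lambda>n. 1 - r 1 1 n + r 0 1 n + r 1 0 n < 3 * e) sequentially"
    by (rule order_tendstoD(2))
  then show ?thesis using eventually_gt_at_top[of 0]
  proof eventually_elim
    case (elim n)
    have "real n * (1 - r 1 1 n + r 0 1 n + r 1 0 n) = real n
        - real (card {i. i < n \<and> fst (cs n i) \<le> 1 \<and> snd (cs n i) \<le> 1})
        + real (card {i. i < n \<and> fst (cs n i) \<le> 0 \<and> snd (cs n i) \<le> 1})
        + real (card {i. i < n \<and> fst (cs n i) \<le> 1 \<and> snd (cs n i) \<le> 0})"
      using elim(2) by (simp add: r_def field_simps)
    then have "real (card {i. i < n \<and> cs n i \<noteq> (1, 1)}) \<le> real n * (1 - r 1 1 n + r 0 1 n + r 1 0 n)"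
      using card_ne_11_le[of n "cs n"] unfolding of_nat_le_iff[symmetric] by simp
    also have "\<dots> \<le> real n * (3 * e)" using elim by (intro mult_left_mono) auto
    finally show ?case by (simp add: mult.commute)
  qed
qed

lemma prob_large_default_le:
  fixes th e' lam :: real and c :: "nat \<Rightarrow> int \<times> int"
  assumes hc: "\<forall>i<n. c i \<in> capD x R" and x: "x \<le> -1"
    and p: "0 \<le> p1" "0 \<le> p2" "p1 \<le> lam" "p2 \<le> lam" "0 < lam"
    and th: "exp 1 ^ 2 * (4 * exp 1 / 3) ^ 3 * lam ^ 3 * th \<le> 1 / 4" "(4 * exp 1 / 3) * lam * th \<le> 1"
      "4 * th \<le> e'"
    and n: "4 \<le> th * real n"
    and few: "real (card {i. i < n \<and> c i \<noteq> (1, 1)}) \<le> th / 8 * real n"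
  shows "measure_pmf.prob (edge_pmf p1 p2 n)
           {G. e' * real n < real (card (final_S x R n G c 1) + card (final_S x R n G c 2))}
         \<le> (1/2) ^ nat \<lfloor>th * real n\<rfloor>"
proof -
  define m where "m = nat \<lfloor>th * real n\<rfloor>"
  define bd where "bd = card {i. i < n \<and> c i \<noteq> (1, 1)}"
  define K where "K = 2 * (m - bd)"
  have m: "real m \<le> th * real n" "th * real n - 1 \<le> real m" using n by (auto simp: m_def)
  have bd: "4 * bd \<le> m" using few m n by (simp add: bd_def)
  have "measure_pmf.prob (edge_pmf p1 p2 n)
           {G. e' * real n < real (card (final_S x R n G c 1) + card (final_S x R n G c 2))}
      \<le> measure_pmf.prob (edge_pmf p1 p2 n) {G. \<exists>U. U \<subseteq> {..<n} \<and> card U = m \<and> K \<le> card (edges_in G U)}"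
  proof (rule measure_pmf.finite_measure_mono_AE, unfold AE_measure_pmf_iff, intro ballI impI)
    fix G assume G: "G \<in> set_pmf (edge_pmf p1 p2 n)"
      and large: "G \<in> {G. e' * real n < real (card (final_S x R n G c 1) + card (final_S x R n G c 2))}"
    define F where "F = final_S x R n G c 1 \<union> final_S x R n G c 2"
    have "finite F" by (rule finite_subset[of _ "{..<n}"]) (auto simp: F_def final_S_def infected_def)
    then have "card (final_S x R n G c 1) \<le> card F" "card (final_S x R n G c 2) \<le> card F"
      by (auto simp: F_def intro: card_mono)
    moreover have "4 * th * real n \<le> e' * real n" using th(3) by (intro mult_right_mono) auto
    then have "2 * real m \<le> e' * real n" using m n by linarith
    ultimately have "m \<le> card F" using large by simp
    then show "G \<in> {G. \<exists>U. U \<subseteq> {..<n} \<and> card U = m \<and> K \<le> card (edges_in G U)}"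
      using dense_set_of_large_default[where G=G, OF hc x edge_pmf_no_self_loops[OF G]] bd
      by (auto simp: K_def F_def bd_def)
  qed simp
  also have "\<dots> \<le> real (n choose m) * (real (2 * m ^ 2) ^ K / fact K * (lam / real n) ^ K)"
    by (rule prob_exists_dense_set_le) (use p in auto)
  also have "\<dots> \<le> (1/2) ^ m"
    by (rule dense_set_bound[OF p(5) _ m(1) _ th(1,2)]) (use bd m n in \<open>auto simp: K_def\<close>)
  finally show ?thesis by (simp add: m_def)
qed

lemma resilient_below_zero:
  assumes x: "x \<le> -1" and R: "R \<ge> 1" and p: "p1 > 1" "p2 > 1"
  shows "resilient x R p1 p2 (return_pmf (1, 1))"
  unfolding resilient_def
proof (intro allI impI)
  fix e' :: real assume e': "e' > 0"
  define lam where "lam = max p1 p2"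
  define D where "D = exp 1 ^ 2 * (4 * exp 1 / 3) ^ 3 * lam ^ 3"
  define Z where "Z = (4 * exp 1 / 3) * lam"
  define th where "th = min (e' / 4) (min (1 / (4 * D)) (1 / Z))"
  have lam: "0 < lam" "p1 \<le> lam" "p2 \<le> lam" using p by (auto simp: lam_def)
  then have DZ: "D > 0" "Z > 0" by (simp_all add: D_def Z_def)
  have "th \<le> 1 / (4 * D)" "th \<le> 1 / Z" by (simp_all add: th_def)
  then have th: "th > 0" "D * th \<le> 1 / 4" "Z * th \<le> 1" "4 * th \<le> e'"
    using e' DZ by (simp_all add: th_def field_simps)
  show "\<exists>e>0. \<forall>Q. shocked x R (return_pmf (1, 1)) Q \<and> measure_pmf.prob Q {(c, c'). c' \<noteq> c} \<le> e \<longrightarrow>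
        (\<forall>cs. has_limit_law x R cs (map_pmf snd Q) \<longrightarrow>
          (\<lambda>n. measure_pmf.prob (edge_pmf p1 p2 n)
             {G. real (card (final_S x R n G (cs n) 1) + card (final_S x R n G (cs n) 2)) \<le> e' * real n})
          \<longlonglongrightarrow> 1)"
  proof (intro exI[of _ "th / 24"] conjI allI impI)
    fix Q cs
    assume Q: "shocked x R (return_pmf (1, 1)) Q \<and> measure_pmf.prob Q {(c, c'). c' \<noteq> c} \<le> th / 24"
      and lim: "has_limit_law x R cs (map_pmf snd Q)"
    have shock: "measure_pmf.prob (map_pmf snd Q) A \<le> th / 24" if "(1, 1) \<notin> A" for A
      using shocked_return_pmf_snd(2)[of x R "(1, 1)" Q A] Q that by linarith
    have "eventually (\<lambda>n. real (card {i. i < n \<and> cs n i \<noteq> (1, 1)}) \<le> 3 * (th / 24) * real n) sequentially"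
      using shocked_return_pmf_snd(1)[of x R "(1, 1)" Q] Q x R th(1)
      by (intro eventually_few_unhealthy[OF lim] shock) auto
    moreover have "eventually (\<lambda>n. 4 \<le> th * real n) sequentially"
      using th(1) by real_asymp
    ultimately have "eventually (\<lambda>n. 1 - (1/2) ^ nat \<lfloor>th * real n\<rfloor> \<le> measure_pmf.prob (edge_pmf p1 p2 n)
             {G. real (card (final_S x R n G (cs n) 1) + card (final_S x R n G (cs n) 2)) \<le> e' * real n})
        sequentially"
    proof eventually_elim
      case (elim n)
      have "\<forall>i<n. cs n i \<in> capD x R" using lim by (simp add: has_limit_law_def)
      from prob_large_default_le[OF this x _ _ lam(2,3,1) _ _ th(4) elim(2)] elim(1) p th
      show ?case unfolding not_less[symmetric] prob_Collect_not
        by (simp add: D_def Z_def mult_ac)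
    qed
    then show "(\<lambda>n. measure_pmf.prob (edge_pmf p1 p2 n)
             {G. real (card (final_S x R n G (cs n) 1) + card (final_S x R n G (cs n) 2)) \<le> e' * real n})
          \<longlonglongrightarrow> 1"
      by (rule tendsto_one_if_ge_one_minus_null[OF _ measure_pmf.prob_le_1 half_pow_nat_floor_tendsto_0[OF th(1)]])
  qed (use th in simp)
qed

section \<open>Non-resilience at zero\<close>

lemma DA_zero_iff: "l \<in> {1,2} \<Longrightarrow> z \<in> capD 0 R \<Longrightarrow> z \<in> DA 0 R l \<longleftrightarrow> comp l z \<le> 0"
  by (cases z) (auto simp: DA_def capD_def comp_def)

lemma seed_in_final_S:
  assumes "i < n" "c i \<in> capD 0 R" "l \<in> {1,2}" "comp l (c i) \<le> 0"
  shows "i \<in> final_S 0 R n G c l"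
proof -
  have "i \<in> infected 0 R n (capital 0 R n G c 0) l"
    using assms DA_zero_iff[of l "c i" R] by (simp add: infected_def)
  then show ?thesis unfolding final_S_def by blast
qed

lemma final_S_closed_under_edges:
  assumes hc: "\<forall>i<n. c i \<in> capD 0 R" and l: "l \<in> {1,2}"
    and u: "u \<in> final_S 0 R n G c l" and j: "j < n" "comp l (c j) = 1" and e: "G (l, u, j)"
  shows "j \<in> final_S 0 R n G c l"
proof -
  obtain k where k: "u \<in> infected 0 R n (capital 0 R n G c k) l" using u by (auto simp: final_S_def)
  then have "card {i \<in> infected 0 R n (capital 0 R n G c k) l. G (l, i, j)} \<noteq> 0"
    using e finite_infected by (auto simp: card_eq_0_iff)
  then have "comp l (capital 0 R n G c (Suc k) j) \<le> 0"
    using comp_capital_Suc_eq_hits[OF hc l, of G k j] j(2) by linarith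
  then have "capital 0 R n G c (Suc k) j \<in> DA 0 R l"
    using DA_zero_iff[OF l] capital_in_capD[where c=c and j=j] hc j(1) by blast
  then show ?thesis using j(1) by (auto simp: final_S_def infected_def)
qed

lemma final_S_has_in_neighbour:
  assumes hc: "\<forall>i<n. c i \<in> capD 0 R" and l: "l \<in> {1,2}"
    and v: "v \<in> final_S 0 R n G c l" "comp l (c v) = 1" and noloop: "\<And>l i. \<not> G (l, i, i)"
  shows "\<exists>u\<in>final_S 0 R n G c l. u \<noteq> v \<and> G (l, u, v)"
proof -
  obtain k where k: "v \<in> infected 0 R n (capital 0 R n G c k) l" using v by (auto simp: final_S_def)
  then have "v < n" "capital 0 R n G c k v \<in> DA 0 R l" by (auto simp: infected_def)
  then have le: "comp l (capital 0 R n G c k v) \<le> 0"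
    using DA_zero_iff[OF l] capital_in_capD[where c=c and j=v] hc by blast
  show ?thesis
  proof (cases k)
    case 0 then show ?thesis using le v(2) by simp
  next
    case (Suc k')
    then have "card {i \<in> infected 0 R n (capital 0 R n G c k') l. G (l, i, v)} \<noteq> 0"
      using le v(2) comp_capital_Suc_eq_hits[OF hc l, of G k' v] by auto
    then obtain u where "u \<in> infected 0 R n (capital 0 R n G c k') l" "G (l, u, v)"
      by (metis (no_types, lifting) card.empty empty_Collect_eq)
    then show ?thesis using noloop[of l v] unfolding final_S_def by (metis UNIV_I UN_I)
  qed
qed

text \<open>The contagion in layer l, seeded by S, has reached exactly A among the unit-capital holdings B:
  every holding of A is hit from S \<union> A \<union> W (W holds the rest), and nothing in S \<union> A hits B - A.\<close>
definition stalls_at :: "nat \<Rightarrow> nat set \<Rightarrow> nat set \<Rightarrow> nat set \<Rightarrow> nat set \<Rightarrow> (nat \<times> nat \<times> nat \<Rightarrow> bool) \<Rightarrow> bool" where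
  "stalls_at l S A W B G \<longleftrightarrow> (\<forall>v\<in>A. \<exists>u\<in>(S \<union> A \<union> W) - {v}. G (l, u, v))
      \<and> (\<forall>u\<in>S \<union> A. \<forall>j\<in>B - A. \<not> G (l, u, j))"

lemma stalls_at_subset_UN_patterns:
  "{G. stalls_at l S A W B G} \<subseteq> (\<Union>f\<in>PiE A (\<lambda>v. (S \<union> A \<union> W) - {v}).
      {G. (\<forall>e\<in>(\<lambda>v. (l, f v, v)) ` A. G e) \<and> (\<forall>e\<in>(\<lambda>(u, j). (l, u, j)) ` ((S \<union> A) \<times> (B - A)). \<not> G e)})"
proof
  fix G assume "G \<in> {G. stalls_at l S A W B G}"
  then have hit: "\<forall>v\<in>A. \<exists>u. u \<in> (S \<union> A \<union> W) - {v} \<and> G (l, u, v)"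
    and miss: "\<forall>u\<in>S \<union> A. \<forall>j\<in>B - A. \<not> G (l, u, j)" by (auto simp: stalls_at_def)
  define f where "f = (\<lambda>v. if v \<in> A then (SOME u. u \<in> (S \<union> A \<union> W) - {v} \<and> G (l, u, v)) else undefined)"
  have "f v \<in> (S \<union> A \<union> W) - {v} \<and> G (l, f v, v)" if "v \<in> A" for v
    using someI_ex[OF hit[rule_format, OF that]] that by (simp add: f_def)
  moreover have "f \<in> extensional A" by (simp add: f_def extensional_def)
  ultimately have f: "f \<in> PiE A (\<lambda>v. (S \<union> A \<union> W) - {v})" and "\<forall>v\<in>A. G (l, f v, v)"
    by (auto simp: PiE_def)
  then have "G \<in> {G. (\<forall>e\<in>(\<lambda>v. (l, f v, v)) ` A. G e) \<and> (\<forall>e\<in>(\<lambda>(u, j). (l, u, j)) ` ((S \<union> A) \<times> (B - A)). \<not> G e)}"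
    using miss by auto
  with f show "G \<in> (\<Union>f\<in>PiE A (\<lambda>v. (S \<union> A \<union> W) - {v}).
      {G. (\<forall>e\<in>(\<lambda>v. (l, f v, v)) ` A. G e) \<and> (\<forall>e\<in>(\<lambda>(u, j). (l, u, j)) ` ((S \<union> A) \<times> (B - A)). \<not> G e)})"
    by (rule UN_I[where a = f])
qed

lemma prob_stalls_at_le:
  fixes p1 p2 :: real and l n :: nat
  defines "q \<equiv> (if l = 1 then p1 else p2) / real n"
  assumes l: "l \<in> {1,2}" and sub: "S \<union> B \<union> W \<subseteq> {..<n}" and SB: "S \<inter> B = {}" and AB: "A \<subseteq> B"
    and p: "p1 \<ge> 0" "p2 \<ge> 0" "(if l = 1 then p1 else p2) \<le> real n"
  shows "measure_pmf.prob (edge_pmf p1 p2 n) {G. stalls_at l S A W B G}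
    \<le> real (card (S \<union> A \<union> W)) ^ card A * q ^ card A * (1 - q) ^ (card (S \<union> A) * card (B - A))"
proof -
  define U where "U = S \<union> A \<union> W"
  define E0 where "E0 = (\<lambda>(u, j). (l, u, j)) ` ((S \<union> A) \<times> (B - A))"
  have Usub: "U \<subseteq> {..<n}" using sub AB by (auto simp: U_def)
  have finU: "finite U" and finA: "finite A" using sub AB by (auto simp: U_def intro: finite_subset)
  have q: "0 \<le> q" "q \<le> 1"
    using p divide_le_eq_1[of "if l = 1 then p1 else p2" "real n"] by (auto simp: q_def)
  have cardE0: "card E0 = card (S \<union> A) * card (B - A)"
    by (simp add: E0_def card_image inj_on_def card_cartesian_product)
  define pattern where "pattern = (\<lambda>f. {G. (\<forall>e\<in>(\<lambda>v. (l, f v, v)) ` A. G e) \<and> (\<forall>e\<in>E0. \<not> G e)})"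
  have prob_pattern: "measure_pmf.prob (edge_pmf p1 p2 n) (pattern f) = q ^ card A * (1 - q) ^ card E0"
    if f: "f \<in> PiE A (\<lambda>v. U - {v})" for f
  proof -
    have "card ((\<lambda>v. (l, f v, v)) ` A) = card A" by (simp add: card_image inj_on_def)
    moreover have "(\<lambda>v. (l, f v, v)) ` A \<subseteq> edges_within {..<n}"
    proof -
      have "f v \<in> U" "f v \<noteq> v" "v \<in> U" if "v \<in> A" for v using f that by (auto simp: U_def)
      then show ?thesis using Usub l unfolding edges_within_def by blast
    qed
    moreover have "E0 \<subseteq> edges_within {..<n}" using sub AB l SB by (auto simp: E0_def edges_within_def)
    moreover have "(\<lambda>v. (l, f v, v)) ` A \<inter> E0 = {}" by (auto simp: E0_def)
    moreover have "\<forall>e\<in>(\<lambda>v. (l, f v, v)) ` A \<union> E0. fst e = l" by (auto simp: E0_def)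
    ultimately show ?thesis
      using prob_edge_pattern_layer[of "(\<lambda>v. (l, f v, v)) ` A" n E0 l p1 p2] p
      by (simp add: q_def pattern_def)
  qed
  have "{G. stalls_at l S A W B G} \<subseteq> (\<Union>f\<in>PiE A (\<lambda>v. U - {v}). pattern f)"
    using stalls_at_subset_UN_patterns[of l S A W B] by (simp add: U_def E0_def pattern_def)
  then have "measure_pmf.prob (edge_pmf p1 p2 n) {G. stalls_at l S A W B G}
      \<le> measure_pmf.prob (edge_pmf p1 p2 n) (\<Union>f\<in>PiE A (\<lambda>v. U - {v}). pattern f)"
    by (rule measure_pmf.finite_measure_mono) simp
  also have "\<dots> \<le> real (card (PiE A (\<lambda>v. U - {v}))) * (q ^ card A * (1 - q) ^ card E0)"
    by (rule prob_finite_UN_le) (use finA finU prob_pattern in \<open>auto intro: finite_PiE\<close>)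
  also have "\<dots> \<le> real (card U ^ card A) * (q ^ card A * (1 - q) ^ card E0)"
  proof (rule mult_right_mono)
    have "card (PiE A (\<lambda>v. U - {v})) \<le> card U ^ card A"
      using finA finU prod_mono[of A "\<lambda>v. card (U - {v})" "\<lambda>_. card U"]
      by (simp add: card_PiE card_mono)
    then show "real (card (PiE A (\<lambda>v. U - {v}))) \<le> real (card U ^ card A)" by linarith
  qed (use q in simp)
  finally show ?thesis by (simp add: U_def cardE0 mult.assoc)
qed

lemma stall_bound:
  fixes p d om :: real and n s a b w :: nat
  assumes p: "p > 1" and d: "4 * p * d \<le> p - 1 - ln p"
    and n: "real n \<ge> p" and part: "s + b + w = n" and ab: "a \<le> b"
    and T: "real (s + a) < d * real n" and w: "real w \<le> om * real n" and om: "om \<le> d"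
  shows "real (b choose a) * real (s + a + w) ^ a * (p / real n) ^ a * (1 - p / real n) ^ ((s + a) * (b - a))
     \<le> exp (- real (s + a) * (p - 1 - ln p) / 2 + real w)"
proof -
  define T where "T = real (s + a)"
  define q where "q = p / real n"
  have rn: "real n > 0" using n p by linarith
  have q: "0 \<le> q" "q \<le> 1" using p n rn by (auto simp: q_def field_simps)
  have c1: "real (b choose a) * real (s + a + w) ^ a * q ^ a \<le> exp (T * ln p + (T + real w))"
  proof -
    have "real b ^ a / fact a \<le> real n ^ a / fact a"
      using part by (intro divide_right_mono power_mono) auto
    then have "real (b choose a) \<le> real n ^ a / fact a"
      using choose_le_pow_div_fact[of b a] by linarith
    then have "real (b choose a) * real (s + a + w) ^ a * q ^ a \<le> real n ^ a / fact a * real (s + a + w) ^ a * q ^ a"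
      using q by (intro mult_right_mono) auto
    also have "\<dots> = (real n * q * real (s + a + w)) ^ a / fact a" by (simp add: power_mult_distrib)
    also have "\<dots> = (p * (T + real w)) ^ a / fact a" using rn by (simp add: q_def T_def)
    also have "\<dots> \<le> exp (T * ln p + (T + real w))" by (rule pow_div_fact_le_exp_ln[OF p]) (simp_all add: T_def)
    finally show ?thesis .
  qed
  have c2: "(1 - q) ^ ((s + a) * (b - a)) \<le> exp (- p * T * (1 - d - om))"
  proof -
    have "(1 - q) ^ ((s + a) * (b - a)) \<le> exp (- q) ^ ((s + a) * (b - a))"
      by (rule power_mono) (use q exp_ge_add_one_self[of "-q"] in auto)
    also have "\<dots> = exp (- q * (T * (real n - T - real w)))"
      using part ab by (simp add: exp_of_nat_mult[symmetric] T_def of_nat_diff mult_ac)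
    also have "\<dots> \<le> exp (- q * (T * (real n * (1 - d - om))))"
    proof -
      have "T * (real n * (1 - d - om)) \<le> T * (real n - T - real w)"
        using T w by (intro mult_left_mono) (auto simp: T_def algebra_simps)
      then show ?thesis using q by (simp add: mult_left_mono)
    qed
    also have "\<dots> = exp (- p * T * (1 - d - om))" using rn by (simp add: q_def)
    finally show ?thesis .
  qed
  define c where "c = p - 1 - ln p"
  have "p * (d + om) \<le> p * (2 * d)" using om p by (intro mult_left_mono) auto
  then have "p * (d + om) \<le> c / 2" using d by (simp add: c_def)
  then have "T * (p * (d + om)) \<le> T * c / 2" using mult_left_mono[of _ "c / 2" T] by (simp add: T_def)
  moreover have "T * ln p + (T + real w) + - p * T * (1 - d - om) = - (T * c) + T * (p * (d + om)) + real w"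
    by (simp add: c_def algebra_simps)
  ultimately have "T * ln p + (T + real w) + - p * T * (1 - d - om) \<le> - T * c / 2 + real w" by linarith
  then have "exp (T * ln p + (T + real w)) * exp (- p * T * (1 - d - om)) \<le> exp (- T * (p - 1 - ln p) / 2 + real w)"
    by (simp add: exp_add[symmetric] c_def)
  with mult_mono[OF c1 c2] q show ?thesis by (simp add: q_def T_def)
qed

lemma final_S_stalls:
  assumes hc: "\<forall>i<n. c i \<in> capD 0 R" and l: "l \<in> {1,2}" and noloop: "\<And>l i. \<not> G (l, i, i)"
  defines "S \<equiv> {i. i < n \<and> comp l (c i) \<le> 0}" and "B \<equiv> {i. i < n \<and> comp l (c i) = 1}"
    and "W \<equiv> {i. i < n \<and> comp l (c i) \<ge> 2}" and "F \<equiv> final_S 0 R n G c l"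
  shows "stalls_at l S (F \<inter> B) W B G" and "card S + card (F \<inter> B) \<le> card F"
proof -
  have SF: "S \<subseteq> F" using seed_in_final_S[OF _ _ l] hc by (auto simp: S_def F_def)
  have F_cover: "F \<subseteq> S \<union> (F \<inter> B) \<union> W" by (auto simp: F_def S_def B_def W_def final_S_def infected_def)
  show "stalls_at l S (F \<inter> B) W B G"
    unfolding stalls_at_def
  proof (intro conjI ballI)
    fix v assume "v \<in> F \<inter> B"
    then obtain u where "u \<in> F" "u \<noteq> v" "G (l, u, v)"
      using final_S_has_in_neighbour[where G=G, OF hc l _ _ noloop] by (auto simp: F_def B_def)
    then show "\<exists>u\<in>S \<union> (F \<inter> B) \<union> W - {v}. G (l, u, v)" using F_cover by blast
  next
    fix u j assume "u \<in> S \<union> F \<inter> B" "j \<in> B - F \<inter> B"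
    then show "\<not> G (l, u, j)"
      using SF final_S_closed_under_edges[OF hc l, of u G j] by (auto simp: F_def B_def)
  qed
  have "finite F" by (rule finite_subset[of _ "{..<n}"]) (auto simp: F_def final_S_def infected_def)
  moreover have "S \<inter> (F \<inter> B) = {}" by (auto simp: S_def B_def)
  ultimately show "card S + card (F \<inter> B) \<le> card F"
    using SF card_Un_disjoint[of S "F \<inter> B"] card_mono[of F "S \<union> (F \<inter> B)"]
    by (simp add: S_def)
qed

lemma prob_stalls_of_size_le:
  fixes p1 p2 :: real and l n :: nat
  defines "q \<equiv> (if l = 1 then p1 else p2) / real n"
  assumes l: "l \<in> {1,2}" and sub: "S \<union> B \<union> W \<subseteq> {..<n}" and disj: "S \<inter> B = {}" "(S \<union> B) \<inter> W = {}"
    and p: "p1 \<ge> 0" "p2 \<ge> 0" "(if l = 1 then p1 else p2) \<le> real n"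
  shows "measure_pmf.prob (edge_pmf p1 p2 n) (\<Union>A\<in>{A. A \<subseteq> B \<and> card A = a}. {G. stalls_at l S A W B G})
    \<le> real (card B choose a) * real (card S + a + card W) ^ a * q ^ a
       * (1 - q) ^ ((card S + a) * (card B - a))"
proof -
  have fin: "finite S" "finite B" "finite W" using sub by (auto intro: finite_subset)
  have "measure_pmf.prob (edge_pmf p1 p2 n) {G. stalls_at l S A W B G}
      \<le> real (card S + a + card W) ^ a * q ^ a * (1 - q) ^ ((card S + a) * (card B - a))"
    if "A \<in> {A. A \<subseteq> B \<and> card A = a}" for A
  proof -
    have A: "A \<subseteq> B" "card A = a" "finite A" using that fin by (auto intro: finite_subset)
    have "card (S \<union> A) = card S + a" using A fin disj by (subst card_Un_disjoint) auto
    moreover have "card (S \<union> A \<union> W) = card S + a + card W"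
      using A fin disj calculation by (subst card_Un_disjoint) auto
    moreover have "card (B - A) = card B - a" using A by (simp add: card_Diff_subset)
    ultimately show ?thesis using prob_stalls_at_le[OF l sub disj(1) A(1) p] A(2) by (simp add: q_def)
  qed
  then have "measure_pmf.prob (edge_pmf p1 p2 n) (\<Union>A\<in>{A. A \<subseteq> B \<and> card A = a}. {G. stalls_at l S A W B G})
      \<le> real (card {A. A \<subseteq> B \<and> card A = a})
         * (real (card S + a + card W) ^ a * q ^ a * (1 - q) ^ ((card S + a) * (card B - a)))"
    using fin by (intro prob_finite_UN_le) auto
  then show ?thesis using n_subsets[OF fin(2), of a] by (simp add: mult.assoc)
qed

lemma prob_small_final_S_le:
  fixes c :: "nat \<Rightarrow> int \<times> int" and p1 p2 d om :: real and l n :: nat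
  defines "q \<equiv> if l = 1 then p1 else p2"
  defines "S \<equiv> {i. i < n \<and> comp l (c i) \<le> 0}" and "W \<equiv> {i. i < n \<and> comp l (c i) \<ge> 2}"
  assumes hc: "\<forall>i<n. c i \<in> capD 0 R" and l: "l \<in> {1,2}"
    and p: "0 \<le> p1" "0 \<le> p2" "1 < q" "q \<le> real n"
    and d: "4 * q * d \<le> q - 1 - ln q" and om: "om \<le> d" and W: "real (card W) \<le> om * real n"
  shows "measure_pmf.prob (edge_pmf p1 p2 n) {G. real (card (final_S 0 R n G c l)) < d * real n}
         \<le> (real n + 1) * exp (- real (card S) * (q - 1 - ln q) / 2 + real (card W))"
proof -
  define B where "B = {i. i < n \<and> comp l (c i) = 1}"
  define Ia where "Ia = {a. a \<le> card B \<and> real (card S + a) < d * real n}"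
  define bound where "bound = exp (- real (card S) * (q - 1 - ln q) / 2 + real (card W))"
  have sub: "S \<union> B \<union> W \<subseteq> {..<n}" and disj: "S \<inter> B = {}" "(S \<union> B) \<inter> W = {}"
    by (auto simp: S_def B_def W_def)
  have part: "card S + card B + card W = n"
  proof -
    have "{..<n} = S \<union> B \<union> W" by (auto simp: S_def B_def W_def)
    then show ?thesis using disj sub by (metis card_Un_disjoint card_lessThan finite_Un finite_lessThan finite_subset)
  qed
  have "measure_pmf.prob (edge_pmf p1 p2 n) {G. real (card (final_S 0 R n G c l)) < d * real n}
      \<le> measure_pmf.prob (edge_pmf p1 p2 n)
          (\<Union>a\<in>Ia. \<Union>A\<in>{A. A \<subseteq> B \<and> card A = a}. {G. stalls_at l S A W B G})"
  proof (rule measure_pmf.finite_measure_mono_AE, unfold AE_measure_pmf_iff, intro ballI impI)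
    fix G assume G: "G \<in> set_pmf (edge_pmf p1 p2 n)"
      and small: "G \<in> {G. real (card (final_S 0 R n G c l)) < d * real n}"
    define A where "A = final_S 0 R n G c l \<inter> B"
    note stalls = final_S_stalls[where G=G, OF hc l edge_pmf_no_self_loops[OF G]]
    have "card A \<in> Ia" using stalls(2) small card_mono[of B A] by (auto simp: Ia_def A_def S_def B_def)
    moreover have "stalls_at l S A W B G" using stalls(1) by (simp add: A_def S_def B_def W_def)
    moreover have "A \<in> {A'. A' \<subseteq> B \<and> card A' = card A}" by (simp add: A_def)
    ultimately show "G \<in> (\<Union>a\<in>Ia. \<Union>A\<in>{A. A \<subseteq> B \<and> card A = a}. {G. stalls_at l S A W B G})"
      by blast
  qed simp
  also have "\<dots> \<le> real (card Ia) * bound"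
  proof (rule prob_finite_UN_le)
    show "finite Ia" by (simp add: Ia_def)
    fix a assume a: "a \<in> Ia"
    have "measure_pmf.prob (edge_pmf p1 p2 n) (\<Union>A\<in>{A. A \<subseteq> B \<and> card A = a}. {G. stalls_at l S A W B G})
      \<le> real (card B choose a) * real (card S + a + card W) ^ a * (q / real n) ^ a
         * (1 - q / real n) ^ ((card S + a) * (card B - a))"
      using prob_stalls_of_size_le[OF l sub disj] p by (simp add: q_def)
    also have "\<dots> \<le> exp (- real (card S + a) * (q - 1 - ln q) / 2 + real (card W))"
      using a by (intro stall_bound[OF p(3) d p(4) part _ _ W om]) (auto simp: Ia_def)
    also have "\<dots> \<le> bound"
    proof -
      define k where "k = q - 1 - ln q"
      have "real (card S) * k \<le> real (card S + a) * k"
        using minus_one_minus_ln_pos[OF p(3)] by (intro mult_right_mono) (auto simp: k_def)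
      then show ?thesis unfolding bound_def k_def[symmetric] by (simp del: of_nat_add)
    qed
    finally show "measure_pmf.prob (edge_pmf p1 p2 n)
        (\<Union>A\<in>{A. A \<subseteq> B \<and> card A = a}. {G. stalls_at l S A W B G}) \<le> bound" .
  qed
  also have "\<dots> \<le> (real n + 1) * bound"
  proof (rule mult_right_mono)
    have "Ia \<subseteq> {..n}" using part by (auto simp: Ia_def)
    then show "real (card Ia) \<le> real n + 1" using card_mono[of "{..n}" Ia] by simp
  qed (simp add: bound_def)
  finally show ?thesis by (simp add: bound_def)
qed

lemma final_S_linear_in_layer:
  fixes cs :: "nat \<Rightarrow> nat \<Rightarrow> int \<times> int" and p1 p2 d sig :: real and l :: nat
  defines "q \<equiv> if l = 1 then p1 else p2"
  assumes l: "l \<in> {1,2}" and p: "0 \<le> p1" "0 \<le> p2" "1 < q" and d: "0 < d" "4 * q * d \<le> q - 1 - ln q"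
    and hc: "\<forall>n. \<forall>i<n. cs n i \<in> capD 0 R"
    and seeds: "(\<lambda>n. real (card {i. i < n \<and> comp l (cs n i) \<le> 0}) / real n) \<longlonglongrightarrow> sig" "sig > 0"
    and unit: "(\<lambda>n. real (card {i. i < n \<and> comp l (cs n i) \<le> 1}) / real n) \<longlonglongrightarrow> 1"
  shows "(\<lambda>n. measure_pmf.prob (edge_pmf p1 p2 n) {G. d * real n \<le> real (card (final_S 0 R n G (cs n) l))})
         \<longlonglongrightarrow> 1"
proof -
  define al where "al = sig * (q - 1 - ln q) / 8"
  define om where "om = min d al"
  have al: "al > 0" using seeds(2) minus_one_minus_ln_pos[OF p(3)] by (simp add: al_def)
  then have om: "om > 0" using d(1) by (simp add: om_def)
  have "eventually (\<lambda>n. real (card {i. i < n \<and> comp l (cs n i) \<le> 0}) / real n > sig / 2) sequentially"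
    using seeds by (intro order_tendstoD(1)) auto
  moreover have "eventually (\<lambda>n. real (card {i. i < n \<and> comp l (cs n i) \<le> 1}) / real n > 1 - om) sequentially"
    using unit om by (intro order_tendstoD(1)) auto
  moreover have "eventually (\<lambda>n. q \<le> real n) sequentially" by real_asymp
  ultimately have "eventually (\<lambda>n. 1 - (real n + 1) * exp (- al * real n) \<le> measure_pmf.prob (edge_pmf p1 p2 n)
      {G. d * real n \<le> real (card (final_S 0 R n G (cs n) l))}) sequentially"
  proof eventually_elim
    case (elim n)
    define S where "S = {i. i < n \<and> comp l (cs n i) \<le> 0}"
    define W where "W = {i. i < n \<and> comp l (cs n i) \<ge> 2}"
    have n: "real n > 0" using elim(3) p(3) by linarith
    have "{i. i < n \<and> comp l (cs n i) \<le> 1} \<union> W = {..<n}" by (auto simp: W_def)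
    moreover have "card ({i. i < n \<and> comp l (cs n i) \<le> 1} \<union> W)
        = card {i. i < n \<and> comp l (cs n i) \<le> 1} + card W"
      by (rule card_Un_disjoint) (auto simp: W_def)
    ultimately have "card {i. i < n \<and> comp l (cs n i) \<le> 1} + card W = n" by simp
    then have W: "real (card W) \<le> om * real n" using elim(2) n by (simp add: field_simps)
    have S: "sig / 2 * real n < real (card S)" using elim(1) n by (simp add: S_def field_simps)
    have small: "measure_pmf.prob (edge_pmf p1 p2 n) {G. real (card (final_S 0 R n G (cs n) l)) < d * real n}
        \<le> (real n + 1) * exp (- real (card S) * (q - 1 - ln q) / 2 + real (card W))"
      unfolding S_def W_def q_def
      by (rule prob_small_final_S_le) (use hc l p elim(3) d(2) W in \<open>simp_all add: q_def W_def om_def\<close>)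
    have "(real n + 1) * exp (- real (card S) * (q - 1 - ln q) / 2 + real (card W))
        \<le> (real n + 1) * exp (- al * real n)"
    proof -
      have "sig / 2 * real n * (q - 1 - ln q) \<le> real (card S) * (q - 1 - ln q)"
        using S minus_one_minus_ln_pos[OF p(3)] by (intro mult_right_mono) auto
      moreover have "sig / 2 * real n * (q - 1 - ln q) = 4 * (al * real n)" by (simp add: al_def)
      moreover have "om * real n \<le> al * real n" using n by (intro mult_right_mono) (auto simp: om_def)
      ultimately have "- real (card S) * (q - 1 - ln q) / 2 + real (card W) \<le> - al * real n"
        using W by linarith
      then show ?thesis by simp
    qed
    with small have "measure_pmf.prob (edge_pmf p1 p2 n)
        {G. \<not> d * real n \<le> real (card (final_S 0 R n G (cs n) l))} \<le> (real n + 1) * exp (- al * real n)"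
      unfolding not_le by (rule order.trans)
    then show ?case unfolding prob_Collect_not by simp
  qed
  then show ?thesis
    using linear_times_exp_neg_tendsto_0[OF al] by (rule tendsto_one_if_ge_one_minus_null[OF _ measure_pmf.prob_le_1])
qed

lemma limit_law_layer_ratio:
  assumes lim: "has_limit_law 0 R cs Gl" and supp: "set_pmf Gl \<subseteq> capD 0 R"
    and l: "l \<in> {1,2}" and a: "0 \<le> a" "a \<le> R"
  shows "(\<lambda>n. real (card {i. i < n \<and> comp l (cs n i) \<le> a}) / real n)
         \<longlonglongrightarrow> measure_pmf.prob Gl {c. comp l c \<le> a}"
proof -
  define a1 b1 where "a1 = (if l = 1 then a else R)" and "b1 = (if l = 1 then R else a)"
  have "(a1, b1) \<in> capD 0 R" using a by (auto simp: a1_def b1_def capD_def)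
  then have "(\<lambda>n. real (card {i. i < n \<and> fst (cs n i) \<le> a1 \<and> snd (cs n i) \<le> b1}) / real n)
      \<longlonglongrightarrow> measure_pmf.prob Gl {(u, v). u \<le> a1 \<and> v \<le> b1}"
    using lim by (auto simp: has_limit_law_def)
  moreover have "fst (cs n i) \<le> R \<and> snd (cs n i) \<le> R" if "i < n" for n i
    using lim that by (auto simp: has_limit_law_def capD_def case_prod_beta)
  then have "{i. i < n \<and> fst (cs n i) \<le> a1 \<and> snd (cs n i) \<le> b1} = {i. i < n \<and> comp l (cs n i) \<le> a}" for n
    using l by (auto simp: comp_def a1_def b1_def)
  moreover have "measure_pmf.prob Gl {(u, v). u \<le> a1 \<and> v \<le> b1} = measure_pmf.prob Gl {c. comp l c \<le> a}"
    using supp l by (intro measure_pmf.finite_measure_eq_AE)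
      (auto simp: AE_measure_pmf_iff capD_def comp_def a1_def b1_def)
  ultimately show ?thesis by simp
qed

lemma shocked_seed_layer:
  assumes sh: "shocked 0 R C Q"
  obtains l where "l \<in> {1,2}" "measure_pmf.prob (map_pmf snd Q) {c. comp l c \<le> 0} > 0"
proof -
  have "measure_pmf.prob Q {(c, c'). c' \<in> DA 0 R 1 \<union> DA 0 R 2}
      \<le> measure_pmf.prob (map_pmf snd Q) ({c. comp 1 c \<le> 0} \<union> {c. comp 2 c \<le> 0})"
    unfolding measure_map_pmf by (rule measure_pmf.finite_measure_mono) (auto simp: DA_def capD_def comp_def)
  also have "\<dots> \<le> measure_pmf.prob (map_pmf snd Q) {c. comp 1 c \<le> 0}
      + measure_pmf.prob (map_pmf snd Q) {c. comp 2 c \<le> 0}"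
    by (rule measure_Un_le) auto
  finally show ?thesis
    using sh that[of 1] that[of 2] measure_nonneg[of "map_pmf snd Q"] by (fastforce simp: shocked_def)
qed

lemma non_resilient_at_zero:
  assumes R: "R \<ge> 1" and p: "p1 > 1" "p2 > 1"
  shows "non_resilient 0 R p1 p2 (return_pmf (1, 1))"
  unfolding non_resilient_def
proof (intro exI[of _ "min ((p1 - 1 - ln p1) / (4 * p1)) ((p2 - 1 - ln p2) / (4 * p2))"] conjI allI impI)
  define d where "d = min ((p1 - 1 - ln p1) / (4 * p1)) ((p2 - 1 - ln p2) / (4 * p2))"
  have d: "d > 0" "4 * p1 * d \<le> p1 - 1 - ln p1" "4 * p2 * d \<le> p2 - 1 - ln p2"
    using p minus_one_minus_ln_pos[of p1] minus_one_minus_ln_pos[of p2]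
    by (auto simp: d_def min_def field_simps)
  then show "0 < min ((p1 - 1 - ln p1) / (4 * p1)) ((p2 - 1 - ln p2) / (4 * p2))" by (simp add: d_def)
  fix Q cs assume sh: "shocked 0 R (return_pmf (1, 1)) Q" and lim: "has_limit_law 0 R cs (map_pmf snd Q)"
  have supp: "set_pmf (map_pmf snd Q) \<subseteq> capD 0 R" using sh by (simp add: shocked_def)
  obtain l where l: "l \<in> {1,2}" and seed: "measure_pmf.prob (map_pmf snd Q) {c. comp l c \<le> 0} > 0"
    using shocked_seed_layer[OF sh] .
  have "measure_pmf.prob (map_pmf snd Q) {c. comp l c \<le> 1} = 1"
  proof (rule antisym[OF measure_pmf.prob_le_1])
    have "{(u, v). u \<le> 1 \<and> v \<le> (1::int)} \<subseteq> {c. comp l c \<le> 1}" by (auto simp: comp_def)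
    then have "measure_pmf.prob (map_pmf snd Q) {(u, v). u \<le> 1 \<and> v \<le> 1}
        \<le> measure_pmf.prob (map_pmf snd Q) {c. comp l c \<le> 1}"
      by (rule measure_pmf.finite_measure_mono) simp
    then show "1 \<le> measure_pmf.prob (map_pmf snd Q) {c. comp l c \<le> 1}"
      using shocked_return_pmf_snd(1)[OF sh] by simp
  qed
  then have layer: "(\<lambda>n. measure_pmf.prob (edge_pmf p1 p2 n)
      {G. d * real n \<le> real (card (final_S 0 R n G (cs n) l))}) \<longlonglongrightarrow> 1"
    using limit_law_layer_ratio[OF lim supp l, of 0] limit_law_layer_ratio[OF lim supp l, of 1] R seed l p d
      lim by (intro final_S_linear_in_layer) (auto simp: has_limit_law_def)
  show "(\<lambda>n. measure_pmf.prob (edge_pmf p1 p2 n)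
     {G. d * real n \<le> real (card (final_S 0 R n G (cs n) 1) + card (final_S 0 R n G (cs n) 2))}) \<longlonglongrightarrow> 1"
    by (rule tendsto_sandwich[OF _ _ layer tendsto_const])
      (use l in \<open>auto intro!: always_eventually measure_pmf.finite_measure_mono measure_pmf.prob_le_1\<close>)
qed

lemma uninfected_return_pmf_11:
  assumes "x \<le> 0" "R \<ge> 1"
  shows "uninfected x R (return_pmf (1, 1))"
  using assms by (auto simp: uninfected_def capD_def DA_def)

theorem mainTheorem8:
  fixes x R :: int and p1 p2 :: real
  assumes "R \<ge> 1" and "p1 > 1" and "p2 > 1"
  shows "(x = 0 \<longrightarrow> uninfected x R (return_pmf (1, 1)) \<and> non_resilient x R p1 p2 (return_pmf (1, 1)))
    \<and> (x \<le> -1 \<longrightarrow> uninfected x R (return_pmf (1, 1)) \<and> resilient x R p1 p2 (return_pmf (1, 1)))"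
  using uninfected_return_pmf_11[of x R] non_resilient_at_zero[OF assms] resilient_below_zero[of x R p1 p2] assms
  by auto

end
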